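(* Let $p_n(\mathbf y)$ be a linear sequence of symmetric functions of binomial type in the variables $\mathbf y=(y_1,y_2,\dots)$. Then for every complex number $a$ and every $n\ge0$, $$p_n(a,y_1,y_2,\dots)=\sum_{k=0}^n\binom nk\,p_k(a,0,0,\dots)\,p_{n-k}(y_1,y_2,\dots).$$
   Context: A linear sequence of symmetric functions of binomial type is a sequence of the form $$p_n(\mathbf y)=\sum_{\lambda\vdash n}\frac{n!}{\prod_i\lambda_i!}\Big(\prod_ia_{\lambda_i}\Big)m_\lambda(\mathbf y),$$ where $(a_i)_{i\ge0}$ is a sequence of complex numbers (a quasi-species) with $a_0=1$, $a_1\ne0$, and $m_\lambda$ is the monomial symmetric function. For a species, $a_i$ is the number of structures on an $i$-set, and $p_n$ enumerates enriched functions from $\{1,\dots,n\}$ to $\{y_1,y_2,\dots\}$. For a symmetric function $p$, the expression $p(a,y_1,y_2,\dots)$ denotes $p$ evaluated at the variable list $(a,y_1,y_2,\dots)$, and $p(a,0,0,\dots)$ its evaluation with all variables but the first set to $0$. *)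

theory Defs
  imports Complex_Main "HOL-Library.Multiset"
begin

text \<open>Symmetric functions are evaluated at finitely supported sequences of complex
  numbers y :: nat => complex (variables y_0, y_1, ...).  An identity of symmetric
  functions holds iff it holds under all such specializations.\<close>

definition partitions :: "nat \<Rightarrow> nat multiset set" where
  "partitions n = {lam. (\<forall>i \<in># lam. 0 < i) \<and> sum_mset lam = n}"

definition exp_shape :: "(nat \<Rightarrow> nat) \<Rightarrow> nat multiset" where
  "exp_shape \<alpha> = image_mset \<alpha> (mset_set {i. \<alpha> i \<noteq> 0})"

text \<open>Exponent vectors
  with support outside the support of y contribute 0 and are omitted.\<close>
definition monomial_sym :: "nat multiset \<Rightarrow> (nat \<Rightarrow> complex) \<Rightarrow> complex" where
  "monomial_sym lam y =
     (\<Sum>\<alpha> \<in> {\<alpha>. {i. \<alpha> i \<noteq> 0} \<subseteq> {i. y i \<noteq> 0} \<and> exp_shape \<alpha> = lam}.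
        \<Prod>i \<in> {i. \<alpha> i \<noteq> 0}. y i ^ \<alpha> i)"

definition binom_sym :: "(nat \<Rightarrow> complex) \<Rightarrow> nat \<Rightarrow> (nat \<Rightarrow> complex) \<Rightarrow> complex" where
  "binom_sym a n y =
     (\<Sum>lam \<in> partitions n.
        (of_nat (fact n) / of_nat (prod_mset (image_mset fact lam)))
        * prod_mset (image_mset a lam) * monomial_sym lam y)"

definition prepend_var :: "complex \<Rightarrow> (nat \<Rightarrow> complex) \<Rightarrow> nat \<Rightarrow> complex" where
  "prepend_var c y = (\<lambda>i. if i = 0 then c else y (i - 1))"

end

theory Submission
  imports Defs
begin

(* Over a finite set S of variables containing the support of y, and using a_0 = 1, the
   function p_n(y) is the sum binom_sym_on of n!/prod alpha_i! * prod a_(alpha_i) y_i^(alpha_i)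
   over all exponent vectors alpha supported in S with |alpha| = n.  Splitting off the
   exponent k of one variable turns this sum into a binomial convolution of the sum for that
   single variable, which is a_k c^k, with the sum over the remaining variables. *)

definition weak_compositions :: "'i set \<Rightarrow> nat \<Rightarrow> ('i \<Rightarrow> nat) set" where
  "weak_compositions S n = {\<alpha>. {i. \<alpha> i \<noteq> 0} \<subseteq> S \<and> sum \<alpha> S = n}"

definition binom_sym_on ::
    "(nat \<Rightarrow> 'a::field_char_0) \<Rightarrow> 'i set \<Rightarrow> nat \<Rightarrow> ('i \<Rightarrow> 'a) \<Rightarrow> 'a" where
  "binom_sym_on a S n y =
     (\<Sum>\<alpha>\<in>weak_compositions S n. of_nat (fact n) / of_nat (\<Prod>i\<in>S. fact (\<alpha> i))
        * (\<Prod>i\<in>S. a (\<alpha> i) * y i ^ \<alpha> i))"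

lemma finite_weak_compositions:
  assumes "finite S"
  shows "finite (weak_compositions S n)"
proof -
  have "weak_compositions S n \<subseteq> {\<alpha>. \<forall>i. (i \<in> S \<longrightarrow> \<alpha> i \<in> {..n}) \<and> (i \<notin> S \<longrightarrow> \<alpha> i = 0)}"
    using member_le_sum[of _ S] assms by (fastforce simp: weak_compositions_def)
  then show ?thesis
    using finite_set_of_finite_funs[OF assms, of "{..n}" 0] finite_subset by blast
qed

lemma weak_compositions_subset:
  assumes "finite S" and "Y \<subseteq> S"
  shows "weak_compositions Y n = {\<alpha> \<in> weak_compositions S n. {i. \<alpha> i \<noteq> 0} \<subseteq> Y}"
proof -
  have "sum \<alpha> Y = sum \<alpha> S" if "{i. \<alpha> i \<noteq> 0} \<subseteq> Y" for \<alpha> :: "'a \<Rightarrow> nat"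
    using assms that by (intro sum.mono_neutral_left) auto
  then show ?thesis
    using assms(2) by (auto simp: weak_compositions_def)
qed

lemma binom_sym_on_empty: "binom_sym_on a {} n y = (if n = 0 then 1 else 0)"
proof -
  have weak_compositions_empty: "weak_compositions {} n = (if n = 0 then {\<lambda>_. 0} else {})"
    by (auto simp: weak_compositions_def)
  show ?thesis
    unfolding binom_sym_on_def weak_compositions_empty by simp
qed

lemma bij_betw_weak_compositions_insert:
  assumes "finite S" and "j \<notin> S"
  shows "bij_betw (\<lambda>\<alpha>. (\<alpha> j, \<alpha>(j := 0)))
    (weak_compositions (insert j S) n) (SIGMA k:{..n}. weak_compositions S (n - k))"
proof (rule bij_betw_byWitness[where f' = "\<lambda>(k, \<beta>). \<beta>(j := k)"])
  have sum_upd: "(\<Sum>i\<in>S. if i = j then k else \<beta> i) = sum \<beta> S" for \<beta> :: "'a \<Rightarrow> nat" and k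
    using assms(2) by (intro sum.cong) auto
  show "(\<lambda>\<alpha>. (\<alpha> j, \<alpha>(j := 0))) ` weak_compositions (insert j S) n
      \<subseteq> (SIGMA k:{..n}. weak_compositions S (n - k))"
    using assms by (fastforce simp: weak_compositions_def sum_upd)
  show "(\<lambda>(k, \<beta>). \<beta>(j := k)) ` (SIGMA k:{..n}. weak_compositions S (n - k))
      \<subseteq> weak_compositions (insert j S) n"
    using assms by (auto simp: weak_compositions_def sum_upd)
qed (use assms in \<open>auto simp: weak_compositions_def fun_eq_iff\<close>)

lemma binom_sym_on_insert:
  fixes y :: "'i \<Rightarrow> 'a::field_char_0"
  assumes fin: "finite S" and j: "j \<notin> S"
  shows "binom_sym_on a (insert j S) n y =
    (\<Sum>k\<le>n. of_nat (n choose k) * (a k * y j ^ k) * binom_sym_on a S (n - k) y)"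
proof -
  define t where "t = (\<lambda>(k, \<beta>). of_nat (n choose k) * (a k * y j ^ k) *
      (of_nat (fact (n - k)) / of_nat (\<Prod>i\<in>S. fact (\<beta> i)) * (\<Prod>i\<in>S. a (\<beta> i) * y i ^ \<beta> i)))"
  have "(\<Sum>k\<le>n. of_nat (n choose k) * (a k * y j ^ k) * binom_sym_on a S (n - k) y)
      = (\<Sum>k\<le>n. \<Sum>\<beta>\<in>weak_compositions S (n - k). t (k, \<beta>))"
    by (simp add: binom_sym_on_def t_def sum_distrib_left)
  also have "\<dots> = (\<Sum>p\<in>(SIGMA k:{..n}. weak_compositions S (n - k)). t p)"
    using sum.Sigma[of "{..n}" "\<lambda>k. weak_compositions S (n - k)" "\<lambda>k \<beta>. t (k, \<beta>)"]
    by (simp add: finite_weak_compositions fin)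
  also have "\<dots> = (\<Sum>\<alpha>\<in>weak_compositions (insert j S) n. t (\<alpha> j, \<alpha>(j := 0)))"
    by (rule sum.reindex_bij_betw[symmetric, OF bij_betw_weak_compositions_insert[OF fin j]])
  also have "\<dots> = binom_sym_on a (insert j S) n y"
    unfolding binom_sym_on_def
  proof (rule sum.cong[OF refl])
    fix \<alpha> assume "\<alpha> \<in> weak_compositions (insert j S) n"
    then have "\<alpha> j \<le> n"
      using fin j by (auto simp: weak_compositions_def)
    have upd: "(\<Prod>i\<in>S. fact ((\<alpha>(j := 0)) i)) = (\<Prod>i\<in>S. fact (\<alpha> i) :: nat)"
      "(\<Prod>i\<in>S. a ((\<alpha>(j := 0)) i) * y i ^ (\<alpha>(j := 0)) i) = (\<Prod>i\<in>S. a (\<alpha> i) * y i ^ \<alpha> i)"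
      using j by (auto intro!: prod.cong)
    show "t (\<alpha> j, \<alpha>(j := 0)) = of_nat (fact n) / of_nat (\<Prod>i\<in>insert j S. fact (\<alpha> i))
        * (\<Prod>i\<in>insert j S. a (\<alpha> i) * y i ^ \<alpha> i)"
      unfolding t_def prod.case upd using fin j \<open>\<alpha> j \<le> n\<close> by (simp add: binomial_fact field_simps)
  qed
  finally show ?thesis ..
qed

lemma binom_sym_on_singleton: "binom_sym_on a {j} n y = a n * y j ^ n"
proof -
  have "binom_sym_on a {j} n y =
      (\<Sum>k\<le>n. of_nat (n choose k) * (a k * y j ^ k) * binom_sym_on a {} (n - k) y)"
    using binom_sym_on_insert[of "{}" j] by simp
  also have "\<dots> = (\<Sum>k\<le>n. if k = n then of_nat (n choose k) * (a k * y j ^ k) else 0)"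
    by (intro sum.cong) (auto simp: binom_sym_on_empty)
  finally show ?thesis
    by simp
qed

lemma binom_sym_on_image:
  assumes "inj f"
  shows "binom_sym_on a (f ` T) n z = binom_sym_on a T n (z \<circ> f)"
  unfolding binom_sym_on_def
proof (rule sum.reindex_bij_witness[where j = "\<lambda>\<alpha>. \<alpha> \<circ> f"
      and i = "\<lambda>\<beta> x. if x \<in> f ` T then \<beta> (inv f x) else 0"])
  have inj_on: "inj_on f T"
    using assms by (rule inj_on_subset) simp
  fix \<alpha> assume \<alpha>: "\<alpha> \<in> weak_compositions (f ` T) n"
  then show "(\<lambda>x. if x \<in> f ` T then (\<alpha> \<circ> f) (inv f x) else 0) = \<alpha>"
    using assms by (auto simp: weak_compositions_def fun_eq_iff)
  show "\<alpha> \<circ> f \<in> weak_compositions T n"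
    using \<alpha> inj_on inj_image_mem_iff[OF assms]
    by (fastforce simp: weak_compositions_def sum.reindex simp del: inj_image_mem_iff)
  show "of_nat (fact n) / of_nat (\<Prod>i\<in>T. fact ((\<alpha> \<circ> f) i)) * (\<Prod>i\<in>T. a ((\<alpha> \<circ> f) i) * (z \<circ> f) i ^ (\<alpha> \<circ> f) i)
      = of_nat (fact n) / of_nat (\<Prod>i\<in>f ` T. fact (\<alpha> i)) * (\<Prod>i\<in>f ` T. a (\<alpha> i) * z i ^ \<alpha> i)"
    using inj_on by (simp add: prod.reindex)
next
  fix \<beta> assume \<beta>: "\<beta> \<in> weak_compositions T n"
  then show "(\<lambda>x. if x \<in> f ` T then \<beta> (inv f x) else 0) \<circ> f = \<beta>"
    using assms by (auto simp: weak_compositions_def fun_eq_iff)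
  then show "(\<lambda>x. if x \<in> f ` T then \<beta> (inv f x) else 0) \<in> weak_compositions (f ` T) n"
    using \<beta> assms by (auto simp: weak_compositions_def sum.reindex inj_on_subset)
qed

lemma binom_sym_on_superset:
  assumes a0: "a 0 = 1" and fin: "finite S" and "Y \<subseteq> S" and supp: "{i. y i \<noteq> 0} \<subseteq> Y"
  shows "binom_sym_on a S n y = binom_sym_on a Y n y"
  unfolding binom_sym_on_def
proof (rule sum.mono_neutral_cong_right)
  note Y = weak_compositions_subset[OF fin \<open>Y \<subseteq> S\<close>]
  show "finite (weak_compositions S n)"
    using fin by (rule finite_weak_compositions)
  show "weak_compositions Y n \<subseteq> weak_compositions S n"
    unfolding Y by blast
  show "\<forall>\<alpha>\<in>weak_compositions S n - weak_compositions Y n.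
      of_nat (fact n) / of_nat (\<Prod>i\<in>S. fact (\<alpha> i)) * (\<Prod>i\<in>S. a (\<alpha> i) * y i ^ \<alpha> i) = 0"
  proof
    fix \<alpha> assume "\<alpha> \<in> weak_compositions S n - weak_compositions Y n"
    then obtain i where "i \<in> S" "\<alpha> i \<noteq> 0" "y i = 0"
      unfolding Y using supp by (auto simp: weak_compositions_def)
    then have "(\<Prod>i\<in>S. a (\<alpha> i) * y i ^ \<alpha> i) = 0"
      using fin by (intro prod_zero) auto
    then show "of_nat (fact n) / of_nat (\<Prod>i\<in>S. fact (\<alpha> i)) * (\<Prod>i\<in>S. a (\<alpha> i) * y i ^ \<alpha> i) = 0"
      by simp
  qed
  fix \<alpha> assume "\<alpha> \<in> weak_compositions Y n"
  then have vanish: "\<forall>i\<in>S - Y. \<alpha> i = 0"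
    by (auto simp: weak_compositions_def)
  have "(\<Prod>i\<in>S. fact (\<alpha> i)) = (\<Prod>i\<in>Y. fact (\<alpha> i) :: nat)"
    using fin \<open>Y \<subseteq> S\<close> vanish by (intro prod.mono_neutral_right) auto
  moreover have "(\<Prod>i\<in>S. a (\<alpha> i) * y i ^ \<alpha> i) = (\<Prod>i\<in>Y. a (\<alpha> i) * y i ^ \<alpha> i)"
    using fin \<open>Y \<subseteq> S\<close> vanish a0 by (intro prod.mono_neutral_right) auto
  ultimately show "of_nat (fact n) / of_nat (\<Prod>i\<in>S. fact (\<alpha> i)) * (\<Prod>i\<in>S. a (\<alpha> i) * y i ^ \<alpha> i)
      = of_nat (fact n) / of_nat (\<Prod>i\<in>Y. fact (\<alpha> i)) * (\<Prod>i\<in>Y. a (\<alpha> i) * y i ^ \<alpha> i)"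
    by simp
qed

lemma finite_partitions: "finite (partitions n)"
proof -
  have "size M \<le> sum_mset M" if "\<forall>i\<in>#M. 0 < i" for M :: "nat multiset"
    using that by (induction M) auto
  then have "partitions n \<subseteq> (\<Union>k\<le>n. multisets_of_size {..n} k)"
    by (fastforce simp: partitions_def multisets_of_size_def dest: multi_member_split)
  then show ?thesis
    using finite_subset by fastforce
qed

lemma sum_mset_exp_shape: "sum_mset (exp_shape \<alpha>) = sum \<alpha> {i. \<alpha> i \<noteq> 0}"
  by (simp add: exp_shape_def sum_unfold_sum_mset)

lemma prod_mset_exp_shape:
  "prod_mset (image_mset f (exp_shape \<alpha>)) = (\<Prod>i | \<alpha> i \<noteq> 0. f (\<alpha> i))"
  by (simp add: exp_shape_def prod_unfold_prod_mset multiset.map_comp o_def)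

lemma exp_shape_in_partitions: "exp_shape \<alpha> \<in> partitions (sum \<alpha> {i. \<alpha> i \<noteq> 0})"
  unfolding partitions_def sum_mset_exp_shape[symmetric]
  by (cases "finite {i. \<alpha> i \<noteq> 0}") (auto simp: exp_shape_def)

lemma sum_support_eq:
  assumes "finite S" and "{i. \<alpha> i \<noteq> 0} \<subseteq> S"
  shows "sum \<alpha> {i. \<alpha> i \<noteq> 0} = sum \<alpha> S"
  using assms by (intro sum.mono_neutral_left) auto

lemma binom_sym_eq_sum_exponent_vectors:
  assumes fin: "finite {i. y i \<noteq> 0}"
  shows "binom_sym a n y =
    (\<Sum>\<alpha>\<in>weak_compositions {i. y i \<noteq> 0} n.
       of_nat (fact n) / of_nat (\<Prod>i | \<alpha> i \<noteq> 0. fact (\<alpha> i))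
       * (\<Prod>i | \<alpha> i \<noteq> 0. a (\<alpha> i)) * (\<Prod>i | \<alpha> i \<noteq> 0. y i ^ \<alpha> i))"
    (is "_ = sum ?w ?G")
proof -
  have G: "\<alpha> \<in> ?G \<longleftrightarrow> {i. \<alpha> i \<noteq> 0} \<subseteq> {i. y i \<noteq> 0} \<and> sum \<alpha> {i. \<alpha> i \<noteq> 0} = n" for \<alpha>
    using sum_support_eq[OF fin] by (auto simp: weak_compositions_def simp del: neq0_conv)
  have "binom_sym a n y = (\<Sum>lam\<in>partitions n. \<Sum>\<alpha>\<in>{\<alpha>\<in>?G. exp_shape \<alpha> = lam}. ?w \<alpha>)"
    unfolding binom_sym_def monomial_sym_def sum_distrib_left
  proof (intro sum.cong refl)
    fix lam assume "lam \<in> partitions n"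
    then show "{\<alpha>. {i. \<alpha> i \<noteq> 0} \<subseteq> {i. y i \<noteq> 0} \<and> exp_shape \<alpha> = lam} = {\<alpha>\<in>?G. exp_shape \<alpha> = lam}"
      using G sum_mset_exp_shape by (auto simp: partitions_def)
    fix \<alpha> assume "\<alpha> \<in> {\<alpha>\<in>?G. exp_shape \<alpha> = lam}"
    then show "of_nat (fact n) / of_nat (prod_mset (image_mset fact lam)) * prod_mset (image_mset a lam)
        * (\<Prod>i | \<alpha> i \<noteq> 0. y i ^ \<alpha> i) = ?w \<alpha>"
      by (auto simp: prod_mset_exp_shape)
  qed
  also have "\<dots> = sum ?w ?G"
    using G exp_shape_in_partitions
    by (intro sum.group finite_weak_compositions finite_partitions fin) auto
  finally show ?thesis .
qed

lemma binom_sym_eq_binom_sym_on_support: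
  assumes a0: "a 0 = 1" and fin: "finite {i. y i \<noteq> 0}"
  shows "binom_sym a n y = binom_sym_on a {i. y i \<noteq> 0} n y"
  unfolding binom_sym_eq_sum_exponent_vectors[OF fin] binom_sym_on_def
proof (rule sum.cong[OF refl])
  fix \<alpha> assume "\<alpha> \<in> weak_compositions {i. y i \<noteq> 0} n"
  then have "{i. \<alpha> i \<noteq> 0} \<subseteq> {i. y i \<noteq> 0}"
    by (simp add: weak_compositions_def)
  then have "(\<Prod>i | y i \<noteq> 0. fact (\<alpha> i)) = (\<Prod>i | \<alpha> i \<noteq> 0. fact (\<alpha> i) :: nat)"
    and "(\<Prod>i | y i \<noteq> 0. a (\<alpha> i) * y i ^ \<alpha> i) = (\<Prod>i | \<alpha> i \<noteq> 0. a (\<alpha> i) * y i ^ \<alpha> i)"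
    using fin a0 by (intro prod.mono_neutral_right; auto)+
  then show "of_nat (fact n) / of_nat (\<Prod>i | \<alpha> i \<noteq> 0. fact (\<alpha> i))
        * (\<Prod>i | \<alpha> i \<noteq> 0. a (\<alpha> i)) * (\<Prod>i | \<alpha> i \<noteq> 0. y i ^ \<alpha> i)
      = of_nat (fact n) / of_nat (\<Prod>i | y i \<noteq> 0. fact (\<alpha> i))
        * (\<Prod>i | y i \<noteq> 0. a (\<alpha> i) * y i ^ \<alpha> i)"
    by (simp only: prod.distrib mult.assoc)
qed

lemma binom_sym_eq_binom_sym_on:
  assumes "a 0 = 1" and "finite S" and "{i. y i \<noteq> 0} \<subseteq> S"
  shows "binom_sym a n y = binom_sym_on a S n y"
  using assms finite_subset[OF assms(3,2)]
  by (simp add: binom_sym_eq_binom_sym_on_support binom_sym_on_superset)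

lemma binom_sym_single_variable:
  assumes "a 0 = 1"
  shows "binom_sym a k (prepend_var c (\<lambda>_. 0)) = a k * c ^ k"
proof -
  have "binom_sym a k (prepend_var c (\<lambda>_. 0)) = binom_sym_on a {0} k (prepend_var c (\<lambda>_. 0))"
    using assms by (intro binom_sym_eq_binom_sym_on) (auto simp: prepend_var_def)
  then show ?thesis
    by (simp add: binom_sym_on_singleton prepend_var_def)
qed

theorem mainTheorem5:
  fixes a :: "nat \<Rightarrow> complex" and c :: complex and y :: "nat \<Rightarrow> complex" and n :: nat
  assumes "a 0 = 1" and "a 1 \<noteq> 0" and "finite {i. y i \<noteq> 0}"
  shows "binom_sym a n (prepend_var c y) =
    (\<Sum>k\<le>n. of_nat (n choose k) * binom_sym a k (prepend_var c (\<lambda>_. 0))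
                 * binom_sym a (n - k) y)"
proof -
  define T where "T = {i. y i \<noteq> 0}"
  have fin: "finite T"
    using assms(3) by (simp add: T_def)
  have supp: "{i. prepend_var c y i \<noteq> 0} \<subseteq> insert 0 (Suc ` T)"
  proof
    fix i assume "i \<in> {i. prepend_var c y i \<noteq> 0}"
    then show "i \<in> insert 0 (Suc ` T)"
      by (cases i) (auto simp: prepend_var_def T_def)
  qed
  have head: "prepend_var c y 0 = c" and tail: "prepend_var c y \<circ> Suc = y"
    by (simp_all add: prepend_var_def fun_eq_iff)
  have "binom_sym a n (prepend_var c y) = binom_sym_on a (insert 0 (Suc ` T)) n (prepend_var c y)"
    using assms(1) fin supp by (intro binom_sym_eq_binom_sym_on) auto
  also have "\<dots> = (\<Sum>k\<le>n. of_nat (n choose k) * (a k * c ^ k) * binom_sym_on a T (n - k) y)"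
    using fin by (simp add: binom_sym_on_insert binom_sym_on_image head tail)
  also have "\<dots> = (\<Sum>k\<le>n. of_nat (n choose k) * binom_sym a k (prepend_var c (\<lambda>_. 0))
                 * binom_sym a (n - k) y)"
    using assms(1) fin by (simp add: binom_sym_single_variable binom_sym_eq_binom_sym_on T_def)
  finally show ?thesis .
qed

end
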